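(* Let $G$ be a group of order $n$ with identity $e$ and let $S\subseteq G\setminus\{e\}$ with $|S|=n-2$. If $G$ has a rotational sequencing, then $G$ has an $S$-sequencing.
   Context: For $S\subseteq G\setminus\{e\}$ with $|S|=k$, an $S$-sequencing of $G$ is an ordering $(g_1,\dots,g_k)$ of the elements of $S$ such that the partial products $h_0=e$, $h_i=g_1\cdots g_i$ ($1\le i\le k$) are pairwise distinct. Let $(a_1,\dots,a_{n-1})$ be a cyclic arrangement of the non-identity elements of $G$ and set $b_i=a_i^{-1}a_{i+1}$ for $1\le i\le n-1$, indices taken modulo $n-1$ (so $b_{n-1}=a_{n-1}^{-1}a_1$). If $b_1,\dots,b_{n-1}$ are pairwise distinct, then $(b_1,\dots,b_{n-1})$ is called a rotational sequencing of $G$. *)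

theory Defs
  imports "HOL-Algebra.Group"
begin

definition partial_prod :: "('a, 'b) monoid_scheme \<Rightarrow> 'a list \<Rightarrow> nat \<Rightarrow> 'a" where
  "partial_prod G gs i = foldl (\<lambda>x y. x \<otimes>\<^bsub>G\<^esub> y) \<one>\<^bsub>G\<^esub> (take i gs)"

definition is_S_sequencing :: "('a, 'b) monoid_scheme \<Rightarrow> 'a set \<Rightarrow> 'a list \<Rightarrow> bool" where
  "is_S_sequencing G S gs \<longleftrightarrow>
     distinct gs \<and> set gs = S \<and>
     distinct (map (partial_prod G gs) [0..<Suc (length gs)])"

definition has_S_sequencing :: "('a, 'b) monoid_scheme \<Rightarrow> 'a set \<Rightarrow> bool" where
  "has_S_sequencing G S \<longleftrightarrow> (\<exists>gs. is_S_sequencing G S gs)"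

definition rot_seq :: "('a, 'b) monoid_scheme \<Rightarrow> 'a list \<Rightarrow> 'a list" where
  "rot_seq G as = map (\<lambda>i. inv\<^bsub>G\<^esub> (as ! i) \<otimes>\<^bsub>G\<^esub> (as ! ((Suc i) mod length as)))
                      [0..<length as]"

definition is_rotational_sequencing :: "('a, 'b) monoid_scheme \<Rightarrow> 'a list \<Rightarrow> bool" where
  "is_rotational_sequencing G bs \<longleftrightarrow>
     (\<exists>as. distinct as \<and> set as = carrier G - {\<one>\<^bsub>G\<^esub>} \<and>
           bs = rot_seq G as \<and> distinct bs)"

definition has_rotational_sequencing :: "('a, 'b) monoid_scheme \<Rightarrow> bool" where
  "has_rotational_sequencing G \<longleftrightarrow> (\<exists>bs. is_rotational_sequencing G bs)"

end

theory Submission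
  imports Defs
begin

text \<open>Write \<open>b = rot_seq G a\<close> for a cyclic arrangement \<open>a\<^sub>0, \<dots>, a\<^bsub>m-1\<^esub>\<close> of the
  non-identity elements. The partial products of \<open>b\<^sub>0, \<dots>, b\<^bsub>m-2\<^esub>\<close> telescope to
  \<open>a\<^sub>0\<inverse> a\<^sub>i\<close>, which are pairwise distinct, so dropping the last entry of \<open>b\<close> leaves a
  sequencing of the remaining \<open>m - 1 = n - 2\<close> elements. Since \<open>b\<close> lists every non-identity
  element, rotating the arrangement so that the one element missing from \<open>S\<close> comes last
  yields an \<open>S\<close>-sequencing.\<close>

lemma partial_prod_Suc:
  "i < length gs \<Longrightarrow> partial_prod G gs (Suc i) = partial_prod G gs i \<otimes>\<^bsub>G\<^esub> gs ! i"
  by (simp add: partial_prod_def take_Suc_conv_app_nth)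

lemma partial_prod_take: "i \<le> k \<Longrightarrow> partial_prod G (take k gs) i = partial_prod G gs i"
  by (simp add: partial_prod_def min_absorb1)

lemma length_rot_seq [simp]: "length (rot_seq G as) = length as"
  by (simp add: rot_seq_def)

lemma nth_rot_seq:
  "i < length as \<Longrightarrow> rot_seq G as ! i = inv\<^bsub>G\<^esub> (as ! i) \<otimes>\<^bsub>G\<^esub> as ! (Suc i mod length as)"
  by (simp add: rot_seq_def)

lemma rot_seq_rotate: "rot_seq G (rotate r as) = rotate r (rot_seq G as)"
proof (rule nth_equalityI)
  fix i assume "i < length (rot_seq G (rotate r as))"
  then have i: "i < length as" by simp
  then have "0 < length as" by linarith
  have "(r + Suc i mod length as) mod length as = Suc ((r + i) mod length as) mod length as"
    by (simp add: mod_Suc_eq mod_add_right_eq)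
  moreover have "Suc i mod length as < length as" "(r + i) mod length as < length as"
    using \<open>0 < length as\<close> by simp_all
  ultimately show "rot_seq G (rotate r as) ! i = rotate r (rot_seq G as) ! i"
    using i by (simp add: nth_rot_seq nth_rotate)
qed simp

lemma last_rotate_Suc:
  assumes "j < length xs"
  shows "last (rotate (Suc j) xs) = xs ! j"
proof -
  have "Suc j + (length xs - 1) = j + length xs"
    using assms by simp
  then have "(Suc j + (length xs - 1)) mod length xs = j"
    using assms by simp
  moreover have "last (rotate (Suc j) xs) = rotate (Suc j) xs ! (length xs - 1)"
    using assms by (metis last_conv_nth length_rotate list.size(3) not_less0)
  ultimately show ?thesis
    using assms by (simp add: nth_rotate del: rotate_Suc)
qed

lemma set_butlast_distinct: "distinct xs \<Longrightarrow> set (butlast xs) = set xs - {last xs}"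
  by (induction xs rule: rev_induct) auto

lemma obtain_Diff_singleton_of_card:
  assumes "finite A" "A \<noteq> {}" "S \<subseteq> A" "card S = card A - 1"
  obtains x where "x \<in> A" "S = A - {x}"
proof -
  have "card S < card A"
    using assms by (simp add: card_gt_0_iff)
  then have "\<not> A \<subseteq> S"
    using card_mono[OF finite_subset[OF assms(3,1)]] by (meson not_le)
  then obtain x where x: "x \<in> A" "x \<notin> S"
    by blast
  have "S = A - {x}"
    using assms x by (intro card_subset_eq) (auto simp: finite_subset)
  with x that show ?thesis by blast
qed

context group
begin

lemma partial_prod_rot_seq:
  assumes "set as \<subseteq> carrier G" and "i < length as"
  shows "partial_prod G (rot_seq G as) i = inv (as ! 0) \<otimes> as ! i"
  using assms(2)
proof (induction i)
  case 0
  then have "as ! 0 \<in> carrier G"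
    using assms(1) nth_mem by blast
  then show ?case
    by (simp add: partial_prod_def)
next
  case (Suc i)
  have "as ! i \<in> set as" "as ! 0 \<in> set as" "as ! Suc i \<in> set as"
    using Suc.prems by (auto intro: nth_mem)
  then have a: "as ! i \<in> carrier G" "as ! 0 \<in> carrier G" "as ! Suc i \<in> carrier G"
    using assms(1) by blast+
  have "partial_prod G (rot_seq G as) (Suc i)
      = (inv (as ! 0) \<otimes> as ! i) \<otimes> (inv (as ! i) \<otimes> as ! Suc i)"
    using Suc by (simp add: partial_prod_Suc nth_rot_seq)
  also have "\<dots> = inv (as ! 0) \<otimes> as ! Suc i"
    using a by (simp add: m_assoc[symmetric]) (simp add: m_assoc)
  finally show ?case .
qed

lemma rot_seq_subset_nonidentity:
  assumes "distinct as" "set as \<subseteq> carrier G" "length as \<noteq> 1"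
  shows "set (rot_seq G as) \<subseteq> carrier G - {\<one>}"
proof
  fix y assume "y \<in> set (rot_seq G as)"
  then obtain i where i: "i < length as" "y = inv (as ! i) \<otimes> as ! (Suc i mod length as)"
    by (auto simp: in_set_conv_nth nth_rot_seq)
  define i' where "i' = Suc i mod length as"
  have i': "i' < length as" "i' \<noteq> i"
    using i assms(3) by (auto simp: i'_def mod_Suc)
  have "as ! i' \<noteq> as ! i"
    using i i' assms(1) by (simp add: nth_eq_iff_index_eq)
  moreover have "as ! i \<in> carrier G" "as ! i' \<in> carrier G"
    using i i' assms(2) by auto
  ultimately show "y \<in> carrier G - {\<one>}"
    using i by (auto simp flip: i'_def) (metis inv_closed inv_equality inv_inv)
qed

lemma butlast_rot_seq_is_S_sequencing:
  assumes "distinct as" "set as \<subseteq> carrier G" "as \<noteq> []" "distinct (rot_seq G as)"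
  shows "is_S_sequencing G (set (butlast (rot_seq G as))) (butlast (rot_seq G as))"
proof -
  let ?gs = "butlast (rot_seq G as)"
  have "map (partial_prod G ?gs) [0..<Suc (length ?gs)]
      = map (\<lambda>i. inv (as ! 0) \<otimes> as ! i) [0..<length as]"
    using assms(2,3)
    by (auto simp: butlast_conv_take partial_prod_take partial_prod_rot_seq)
  moreover have "inj_on (\<lambda>i. inv (as ! 0) \<otimes> as ! i) {0..<length as}"
  proof (rule inj_onI)
    fix i j assume ij: "i \<in> {0..<length as}" "j \<in> {0..<length as}"
      and eq: "inv (as ! 0) \<otimes> as ! i = inv (as ! 0) \<otimes> as ! j"
    have "as ! 0 \<in> carrier G" "as ! i \<in> carrier G" "as ! j \<in> carrier G"
      using ij assms(2,3) nth_mem by auto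
    with eq have "as ! i = as ! j"
      by simp
    with ij assms(1) show "i = j"
      by (simp add: nth_eq_iff_index_eq)
  qed
  ultimately have "distinct (map (partial_prod G ?gs) [0..<Suc (length ?gs)])"
    by (simp add: distinct_map)
  then show ?thesis
    using assms(4) by (simp add: is_S_sequencing_def distinct_butlast)
qed

lemma has_S_sequencing_rot_seq_Diff:
  assumes "distinct as" "set as \<subseteq> carrier G" "distinct (rot_seq G as)"
    and "x \<in> set (rot_seq G as)"
  shows "has_S_sequencing G (set (rot_seq G as) - {x})"
proof -
  obtain j where j: "j < length as" "rot_seq G as ! j = x"
    using assms(4) by (auto simp: in_set_conv_nth)
  let ?as' = "rotate (Suc j) as"
  have rs: "rot_seq G ?as' = rotate (Suc j) (rot_seq G as)"
    by (rule rot_seq_rotate)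
  have "last (rot_seq G ?as') = x"
    unfolding rs using j by (simp only: last_rotate_Suc length_rot_seq)
  then have set_gs: "set (butlast (rot_seq G ?as')) = set (rot_seq G as) - {x}"
    using assms(3) unfolding rs by (simp add: set_butlast_distinct del: rotate_Suc)
  have "as \<noteq> []"
    using j(1) by (cases as) simp_all
  then have "distinct ?as'" "set ?as' \<subseteq> carrier G" "?as' \<noteq> []" "distinct (rot_seq G ?as')"
    using assms(1-3) unfolding rs by (simp_all del: rotate_Suc)
  then have "is_S_sequencing G (set (rot_seq G as) - {x}) (butlast (rot_seq G ?as'))"
    unfolding set_gs[symmetric] by (rule butlast_rot_seq_is_S_sequencing)
  then show ?thesis
    unfolding has_S_sequencing_def by blast
qed

lemma has_rotational_sequencingE:
  assumes "finite (carrier G)" "card (carrier G) \<noteq> 2" "has_rotational_sequencing G"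
  obtains as where "distinct as" "set as \<subseteq> carrier G" "distinct (rot_seq G as)"
    "set (rot_seq G as) = carrier G - {\<one>}"
proof -
  obtain as where as: "distinct as" "set as = carrier G - {\<one>}" "distinct (rot_seq G as)"
    using assms(3) by (auto simp: has_rotational_sequencing_def is_rotational_sequencing_def)
  have len: "length as = card (carrier G - {\<one>})"
    using as(1,2) by (metis distinct_card)
  then have "length as \<noteq> 1"
    using assms(1,2) by (simp add: card_Diff_singleton)
  then have "set (rot_seq G as) \<subseteq> carrier G - {\<one>}"
    using as by (simp add: rot_seq_subset_nonidentity)
  moreover have "card (set (rot_seq G as)) = card (carrier G - {\<one>})"
    using as(3) len by (simp add: distinct_card)
  ultimately have "set (rot_seq G as) = carrier G - {\<one>}"
    using assms(1) by (intro card_subset_eq) auto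
  with as that show ?thesis by blast
qed

end

theorem lemma4p2:
  fixes G :: "('a, 'b) monoid_scheme" and S :: "'a set"
  assumes "group G" and "finite (carrier G)"
    and "S \<subseteq> carrier G - {\<one>\<^bsub>G\<^esub>}"
    and "card S = card (carrier G) - 2"
    and "has_rotational_sequencing G"
  shows "has_S_sequencing G S"
proof (cases "card (carrier G) \<le> 2")
  case True
  then have "S = {}"
    using assms(2-4) by (simp add: finite_subset)
  then show ?thesis
    by (auto simp: has_S_sequencing_def is_S_sequencing_def)
next
  case False
  interpret group G by (rule assms(1))
  let ?N = "carrier G - {\<one>\<^bsub>G\<^esub>}"
  obtain as where as: "distinct as" "set as \<subseteq> carrier G" "distinct (rot_seq G as)"
    "set (rot_seq G as) = ?N"
    using has_rotational_sequencingE[OF assms(2) _ assms(5)] False by force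
  have card_N: "card ?N = card (carrier G) - 1"
    using assms(2) by (simp add: card_Diff_singleton)
  then have "?N \<noteq> {}" "card S = card ?N - 1"
    using False assms(4) by fastforce+
  then obtain x where "x \<in> ?N" "S = ?N - {x}"
    using obtain_Diff_singleton_of_card[of ?N S] assms(2,3) by blast
  then show ?thesis
    using has_S_sequencing_rot_seq_Diff[OF as(1-3)] as(4) by simp
qed

end
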